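(* Fix $p\in(0,1)$, $\lambda\in[0,1]$, an integer $B>1$, $\omega>0$, $C_r\ge 0$, and let $V$ be the value function (as described in the context). Then: (i) for every $q\in\{0,1,\dots,B\}$ and all integers $1\le\Delta_1\le\Delta_2$, $V(\Delta_2,q)-V(\Delta_1,q)\ge \Delta_2-\Delta_1$; (ii) for every $q\in\{0,1,\dots,B-1\}$ and every $\Delta\in\mathbb Z^+$, $V(\Delta+1,q+1)-V(\Delta,q+1)\ge p\,[V(\Delta+1,q)-V(\Delta,q)]$.
   Context: System model. Time is slotted. State space $\mathcal S=\mathbb Z^+\times\{0,1,\dots,B\}$; a state $\mathbf x=(\Delta,q)$ consists of the Age of Information $\Delta\in\mathbb Z^+=\{1,2,\dots\}$ and the battery level $q$. Action set $\mathcal A=\{0,1\}$ ($a=1$: generate and transmit an update; $a=0$: idle). Let $u(x)=1$ if $x>0$ and $u(x)=0$ otherwise. Transitions: given state $(\Delta,q)$ and action $a$, draw independently $b\sim\mathrm{Bernoulli}(\lambda)$ (harvested energy arrival) and, if $a=1$, a success indicator $s\sim\mathrm{Bernoulli}(1-p)$ (the update is erased with probability $p$); if $a=0$ set $s=0$. The next state is $(\Delta',q')$ with $\Delta'=1$ if $s=1$ and $\Delta'=\Delta+1$ otherwise, and $q'=\min\{q+b-a\,u(q),\,B\}$. One-step cost: $C(\mathbf x,a)=\Delta+\omega C_r\,a\,(1-u(q))$ (transmitting with empty battery uses paid backup energy at cost $C_r$, weighted by $\omega$). Value iteration: $V_0(\mathbf x)=0$ for all $\mathbf x$; for $k\ge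 0$, $Q_k(\mathbf x,a)=C(\mathbf x,a)+\sum_{\mathbf x'\in\mathcal S}\Pr(\mathbf x'\mid\mathbf x,a)V_k(\mathbf x')$ and $V_{k+1}(\mathbf x)=\min_{a\in\mathcal A}Q_k(\mathbf x,a)$. Value function: $V:\mathcal S\to\mathbb R$ together with a constant $g\in\mathbb R$ satisfies the average-cost Bellman equation $g+V(\mathbf x)=\min_{a\in\mathcal A}\{C(\mathbf x,a)+\sum_{\mathbf x'}\Pr(\mathbf x'\mid\mathbf x,a)V(\mathbf x')\}$ for all $\mathbf x\in\mathcal S$, and $V$ is obtained from value iteration in the sense that $V(\mathbf x)=\lim_{k\to\infty}(V_k(\mathbf x)-c_k)$ pointwise for some real constants $c_k$. Write $Q(\mathbf x,a)=C(\mathbf x,a)+\sum_{\mathbf x'}\Pr(\mathbf x'\mid\mathbf x,a)V(\mathbf x')$. *)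

theory Defs
  imports Complex_Main
begin

text \<open>States are pairs (Delta, q) with Delta >= 1 (Age of Information) and 0 <= q <= B
  (battery level). Functions on states are represented as curried functions
  nat => nat => real; only their values on valid states matter.\<close>

definition valid_state :: "nat \<Rightarrow> nat \<Rightarrow> nat \<Rightarrow> bool" where
  "valid_state B \<Delta> q \<longleftrightarrow> 1 \<le> \<Delta> \<and> q \<le> B"

definition u :: "nat \<Rightarrow> nat" where
  "u x = (if x > 0 then 1 else 0)"

text \<open>Probability of the Bernoulli(lambda) energy arrival b.\<close>
definition prob_b :: "real \<Rightarrow> bool \<Rightarrow> real" where
  "prob_b lam b = (if b then lam else 1 - lam)"

text \<open>Probability of the success indicator s given action a (a = 1: Bernoulli(1-p); a = 0: s = 0).\<close>
definition prob_s :: "real \<Rightarrow> nat \<Rightarrow> bool \<Rightarrow> real" where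
  "prob_s p a s = (if a = 1 then (if s then 1 - p else p) else (if s then 0 else 1))"

definition next_aoi :: "nat \<Rightarrow> bool \<Rightarrow> nat" where
  "next_aoi \<Delta> s = (if s then 1 else \<Delta> + 1)"

definition next_bat :: "nat \<Rightarrow> nat \<Rightarrow> nat \<Rightarrow> bool \<Rightarrow> nat" where
  "next_bat B q a b = min (q + (if b then 1 else 0) - a * u q) B"

definition exp_next :: "real \<Rightarrow> real \<Rightarrow> nat \<Rightarrow> (nat \<Rightarrow> nat \<Rightarrow> real) \<Rightarrow> nat \<Rightarrow> nat \<Rightarrow> nat \<Rightarrow> real" where
  "exp_next p lam B W \<Delta> q a =
     (\<Sum>b\<in>(UNIV::bool set). \<Sum>s\<in>(UNIV::bool set).
        prob_b lam b * prob_s p a s * W (next_aoi \<Delta> s) (next_bat B q a b))"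

definition cost :: "real \<Rightarrow> real \<Rightarrow> nat \<Rightarrow> nat \<Rightarrow> nat \<Rightarrow> real" where
  "cost \<omega> Cr \<Delta> q a = real \<Delta> + \<omega> * Cr * real a * (1 - real (u q))"

definition Qfun :: "real \<Rightarrow> real \<Rightarrow> nat \<Rightarrow> real \<Rightarrow> real \<Rightarrow> (nat \<Rightarrow> nat \<Rightarrow> real) \<Rightarrow> nat \<Rightarrow> nat \<Rightarrow> nat \<Rightarrow> real" where
  "Qfun p lam B \<omega> Cr W \<Delta> q a = cost \<omega> Cr \<Delta> q a + exp_next p lam B W \<Delta> q a"

fun VI :: "real \<Rightarrow> real \<Rightarrow> nat \<Rightarrow> real \<Rightarrow> real \<Rightarrow> nat \<Rightarrow> nat \<Rightarrow> nat \<Rightarrow> real" where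
  "VI p lam B \<omega> Cr 0 \<Delta> q = 0"
| "VI p lam B \<omega> Cr (Suc k) \<Delta> q =
     min (Qfun p lam B \<omega> Cr (VI p lam B \<omega> Cr k) \<Delta> q 0) (Qfun p lam B \<omega> Cr (VI p lam B \<omega> Cr k) \<Delta> q 1)"

definition value_function :: "real \<Rightarrow> real \<Rightarrow> nat \<Rightarrow> real \<Rightarrow> real \<Rightarrow> (nat \<Rightarrow> nat \<Rightarrow> real) \<Rightarrow> bool" where
  "value_function p lam B \<omega> Cr V \<longleftrightarrow>
     (\<exists>g::real. \<forall>\<Delta> q. valid_state B \<Delta> q \<longrightarrow>
         g + V \<Delta> q = min (Qfun p lam B \<omega> Cr V \<Delta> q 0) (Qfun p lam B \<omega> Cr V \<Delta> q 1)) \<and>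
     (\<exists>c::nat \<Rightarrow> real. \<forall>\<Delta> q. valid_state B \<Delta> q \<longrightarrow>
         (\<lambda>k. VI p lam B \<omega> Cr k \<Delta> q - c k) \<longlonglongrightarrow> V \<Delta> q)"

end

theory Submission
  imports Defs
begin

text \<open>Both properties are invariants of value iteration, and they pass to the limit V.
  Writing d q for the increment of W in the age at battery level q, the Q-factors of the
  Bellman update have age increments 1 + (a convex combination of values of d), the transmit
  one damped by the erasure probability p. If d is nonnegative and satisfies
  d (q + 1) \<ge> p d q, the update increments are at least 1; at level q + 1 both are at least
  1 + p M and at level q both are at most 1 + M, where M = \<lambda> d (q + 1) + (1 - \<lambda>) d q,
  which gives the p-monotonicity of the updated increments since p \<le> 1.\<close>

definition bellman :: "real \<Rightarrow> real \<Rightarrow> nat \<Rightarrow> real \<Rightarrow> real \<Rightarrow> (nat \<Rightarrow> nat \<Rightarrow> real) \<Rightarrow> nat \<Rightarrow> nat \<Rightarrow> real" where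
  "bellman p lam B \<omega> Cr W \<Delta> q = min (Qfun p lam B \<omega> Cr W \<Delta> q 0) (Qfun p lam B \<omega> Cr W \<Delta> q 1)"

definition age_incr :: "(nat \<Rightarrow> nat \<Rightarrow> real) \<Rightarrow> nat \<Rightarrow> nat \<Rightarrow> real" where
  "age_incr W \<Delta> q = W (Suc \<Delta>) q - W \<Delta> q"

definition nonneg_p_mono :: "nat \<Rightarrow> real \<Rightarrow> (nat \<Rightarrow> real) \<Rightarrow> bool" where
  "nonneg_p_mono B p d \<longleftrightarrow> (\<forall>k \<le> B. 0 \<le> d k) \<and> (\<forall>k < B. p * d k \<le> d (Suc k))"

lemma VI_Suc_eq_bellman: "VI p lam B \<omega> Cr (Suc k) = bellman p lam B \<omega> Cr (VI p lam B \<omega> Cr k)"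
  by (intro ext) (simp add: bellman_def)

lemma min_diff_ge: "min (a - c) (b - d) \<le> min a b - min c (d::real)"
  by (auto simp: min_def)

lemma min_diff_le: "min a b - min c d \<le> max (a - c) (b - (d::real))"
  by (auto simp: min_def max_def)

lemma convex_comb_mono:
  fixes x y x' y' lam :: real
  assumes "x \<le> x'" "y \<le> y'" "0 \<le> lam" "lam \<le> 1"
  shows "lam * x + (1 - lam) * y \<le> lam * x' + (1 - lam) * y'"
  using assms by (simp add: add_mono mult_left_mono)

lemma nonneg_p_mono_le:
  assumes "nonneg_p_mono B p d" "0 \<le> p" "p \<le> 1" "i \<le> k" "k \<le> Suc i" "k \<le> B"
  shows "p * d i \<le> d k"
proof (cases "k = i")
  case True
  then have "0 \<le> d k" using assms(1,6) by (simp add: nonneg_p_mono_def)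
  then show ?thesis using True assms(2,3) by (simp add: mult_left_le_one_le)
next
  case False
  then have "k = Suc i" using assms(4,5) by simp
  then show ?thesis using assms(1,6) by (simp add: nonneg_p_mono_def)
qed

lemma Qfun_idle:
  "Qfun p lam B \<omega> Cr W \<Delta> q 0
     = real \<Delta> + lam * W (Suc \<Delta>) (min (Suc q) B) + (1 - lam) * W (Suc \<Delta>) (min q B)"
  unfolding Qfun_def exp_next_def cost_def prob_b_def prob_s_def next_aoi_def next_bat_def
  by (simp add: UNIV_bool)

lemma Qfun_transmit:
  "Qfun p lam B \<omega> Cr W \<Delta> q 1 = real \<Delta> + \<omega> * Cr * (1 - real (u q))
     + lam * ((1 - p) * W 1 (min (Suc q - u q) B) + p * W (Suc \<Delta>) (min (Suc q - u q) B))
     + (1 - lam) * ((1 - p) * W 1 (min (q - u q) B) + p * W (Suc \<Delta>) (min (q - u q) B))"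
  unfolding Qfun_def exp_next_def cost_def prob_b_def prob_s_def next_aoi_def next_bat_def
  by (simp add: UNIV_bool algebra_simps)

lemma Qfun_idle_age_incr:
  "Qfun p lam B \<omega> Cr W (Suc \<Delta>) q 0 - Qfun p lam B \<omega> Cr W \<Delta> q 0
     = 1 + (lam * age_incr W (Suc \<Delta>) (min (Suc q) B) + (1 - lam) * age_incr W (Suc \<Delta>) (min q B))"
  by (simp add: Qfun_idle age_incr_def algebra_simps)

text \<open>A successful transmission resets the age to 1 in both terms, so only erased updates
  contribute to the increment.\<close>

lemma Qfun_transmit_age_incr:
  "Qfun p lam B \<omega> Cr W (Suc \<Delta>) q 1 - Qfun p lam B \<omega> Cr W \<Delta> q 1
     = 1 + p * (lam * age_incr W (Suc \<Delta>) (min (Suc q - u q) B)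
                + (1 - lam) * age_incr W (Suc \<Delta>) (min (q - u q) B))"
  unfolding Qfun_transmit by (simp add: age_incr_def algebra_simps)

lemma bellman_age_incr_ge_one:
  assumes "0 \<le> p" "0 \<le> lam" "lam \<le> 1" and nonneg: "\<And>k. k \<le> B \<Longrightarrow> 0 \<le> age_incr W (Suc \<Delta>) k"
  shows "1 \<le> age_incr (bellman p lam B \<omega> Cr W) \<Delta> q"
proof -
  have mix_nonneg: "0 \<le> lam * age_incr W (Suc \<Delta>) (min i B) + (1 - lam) * age_incr W (Suc \<Delta>) (min j B)"
    for i j using convex_comb_mono[OF nonneg nonneg \<open>0 \<le> lam\<close> \<open>lam \<le> 1\<close>] by simp
  have "1 \<le> min (Qfun p lam B \<omega> Cr W (Suc \<Delta>) q 0 - Qfun p lam B \<omega> Cr W \<Delta> q 0)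
               (Qfun p lam B \<omega> Cr W (Suc \<Delta>) q 1 - Qfun p lam B \<omega> Cr W \<Delta> q 1)"
    unfolding Qfun_idle_age_incr Qfun_transmit_age_incr
    using mix_nonneg \<open>0 \<le> p\<close> by simp
  also have "\<dots> \<le> age_incr (bellman p lam B \<omega> Cr W) \<Delta> q"
    unfolding age_incr_def bellman_def by (rule min_diff_ge)
  finally show ?thesis .
qed

lemma bellman_age_incr_p_mono:
  assumes p: "0 \<le> p" "p \<le> 1" and lam: "0 \<le> lam" "lam \<le> 1"
    and d: "nonneg_p_mono B p (age_incr W (Suc \<Delta>))" and "q < B"
  shows "p * age_incr (bellman p lam B \<omega> Cr W) \<Delta> q \<le> age_incr (bellman p lam B \<omega> Cr W) \<Delta> (Suc q)"
proof -
  let ?d = "age_incr W (Suc \<Delta>)"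
  let ?Q = "Qfun p lam B \<omega> Cr W"
  define M where "M = lam * ?d (Suc q) + (1 - lam) * ?d q"
  have d_le: "p * ?d i \<le> ?d k" if "i \<le> k" "k \<le> Suc i" "k \<le> B" for i k
    using nonneg_p_mono_le[OF d p that] .
  have mins: "min (Suc q) B = Suc q" "min q B = q" "min (Suc q - u q) B = Suc q - u q"
    "min (q - u q) B = q - u q" "u (Suc q) = 1"
    using \<open>q < B\<close> by (auto simp: u_def)
  have "p * M \<le> lam * ?d (min (Suc (Suc q)) B) + (1 - lam) * ?d (Suc q)"
    using convex_comb_mono[OF d_le d_le lam, of "Suc q" "min (Suc (Suc q)) B" q "Suc q"] \<open>q < B\<close>
    by (simp add: M_def algebra_simps)
  then have "1 + p * M \<le> min (?Q (Suc \<Delta>) (Suc q) 0 - ?Q \<Delta> (Suc q) 0) (?Q (Suc \<Delta>) (Suc q) 1 - ?Q \<Delta> (Suc q) 1)"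
    unfolding Qfun_idle_age_incr Qfun_transmit_age_incr using mins M_def by simp
  also have "\<dots> \<le> age_incr (bellman p lam B \<omega> Cr W) \<Delta> (Suc q)"
    unfolding age_incr_def bellman_def by (rule min_diff_ge)
  finally have lower: "1 + p * M \<le> age_incr (bellman p lam B \<omega> Cr W) \<Delta> (Suc q)" .
  have "p * (lam * ?d (Suc q - u q) + (1 - lam) * ?d (q - u q)) \<le> M"
    using convex_comb_mono[OF d_le d_le lam, of "Suc q - u q" "Suc q" "q - u q" q] \<open>q < B\<close>
    by (simp add: M_def u_def algebra_simps)
  then have "max (?Q (Suc \<Delta>) q 0 - ?Q \<Delta> q 0) (?Q (Suc \<Delta>) q 1 - ?Q \<Delta> q 1) \<le> 1 + M"
    unfolding Qfun_idle_age_incr Qfun_transmit_age_incr using mins M_def by simp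
  then have upper: "age_incr (bellman p lam B \<omega> Cr W) \<Delta> q \<le> 1 + M"
    unfolding age_incr_def bellman_def using min_diff_le order_trans by blast
  have "p * age_incr (bellman p lam B \<omega> Cr W) \<Delta> q \<le> p * (1 + M)"
    using upper p(1) by (rule mult_left_mono)
  also have "\<dots> \<le> 1 + p * M"
    using p(2) by (simp add: algebra_simps)
  finally show ?thesis using lower by linarith
qed

lemma VI_age_incr_nonneg_p_mono:
  assumes "0 \<le> p" "p \<le> 1" "0 \<le> lam" "lam \<le> 1"
  shows "nonneg_p_mono B p (age_incr (VI p lam B \<omega> Cr k) \<Delta>)"
proof (induction k arbitrary: \<Delta>)
  case 0
  then show ?case by (simp add: nonneg_p_mono_def age_incr_def)
next
  case (Suc k)
  have "1 \<le> age_incr (bellman p lam B \<omega> Cr (VI p lam B \<omega> Cr k)) \<Delta> q" for q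
    using bellman_age_incr_ge_one assms Suc.IH by (auto simp: nonneg_p_mono_def)
  moreover have "p * age_incr (bellman p lam B \<omega> Cr (VI p lam B \<omega> Cr k)) \<Delta> q
      \<le> age_incr (bellman p lam B \<omega> Cr (VI p lam B \<omega> Cr k)) \<Delta> (Suc q)" if "q < B" for q
    using bellman_age_incr_p_mono[OF assms Suc.IH that] .
  ultimately show ?case
    unfolding VI_Suc_eq_bellman nonneg_p_mono_def by (auto intro: order_trans[OF zero_le_one])
qed

lemma VI_age_incr_ge_one:
  assumes "0 \<le> p" "p \<le> 1" "0 \<le> lam" "lam \<le> 1"
  shows "1 \<le> age_incr (VI p lam B \<omega> Cr (Suc k)) \<Delta> q"
  unfolding VI_Suc_eq_bellman using assms VI_age_incr_nonneg_p_mono[OF assms]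
  by (intro bellman_age_incr_ge_one) (auto simp: nonneg_p_mono_def)

lemma value_function_age_incr_limit:
  assumes "value_function p lam B \<omega> Cr V" "1 \<le> \<Delta>" "q \<le> B"
  shows "(\<lambda>k. age_incr (VI p lam B \<omega> Cr k) \<Delta> q) \<longlonglongrightarrow> age_incr V \<Delta> q"
proof -
  obtain c where c: "\<And>\<Delta> q. valid_state B \<Delta> q \<Longrightarrow> (\<lambda>k. VI p lam B \<omega> Cr k \<Delta> q - c k) \<longlonglongrightarrow> V \<Delta> q"
    using assms(1) unfolding value_function_def by blast
  have "(\<lambda>k. (VI p lam B \<omega> Cr k (Suc \<Delta>) q - c k) - (VI p lam B \<omega> Cr k \<Delta> q - c k))
          \<longlonglongrightarrow> V (Suc \<Delta>) q - V \<Delta> q"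
    using assms(2,3) by (intro tendsto_diff c) (auto simp: valid_state_def)
  then show ?thesis by (simp add: age_incr_def)
qed

theorem lemma2:
  fixes p lam \<omega> Cr :: real and B :: nat and V :: "nat \<Rightarrow> nat \<Rightarrow> real"
  assumes "0 < p" "p < 1" "0 \<le> lam" "lam \<le> 1" "B > 1" "\<omega> > 0" "Cr \<ge> 0"
    and "value_function p lam B \<omega> Cr V"
  shows "(\<forall>q \<le> B. \<forall>\<Delta>1 \<Delta>2. 1 \<le> \<Delta>1 \<and> \<Delta>1 \<le> \<Delta>2 \<longrightarrow>
            V \<Delta>2 q - V \<Delta>1 q \<ge> real \<Delta>2 - real \<Delta>1)
       \<and> (\<forall>q < B. \<forall>\<Delta> \<ge> 1.
            V (\<Delta> + 1) (q + 1) - V \<Delta> (q + 1) \<ge> p * (V (\<Delta> + 1) q - V \<Delta> q))"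
proof -
  have pl: "0 \<le> p" "p \<le> 1" "0 \<le> lam" "lam \<le> 1" using assms by auto
  note lim = value_function_age_incr_limit[OF assms(8)]
  have incr_ge_one: "1 \<le> age_incr V \<Delta> q" if "1 \<le> \<Delta>" "q \<le> B" for \<Delta> q
    using LIMSEQ_le_const[OF lim[OF that], of 1] VI_age_incr_ge_one[OF pl]
    by (metis Suc_le_D)
  have "p * age_incr V \<Delta> q \<le> age_incr V \<Delta> (Suc q)" if "1 \<le> \<Delta>" "q < B" for \<Delta> q
    using that VI_age_incr_nonneg_p_mono[OF pl]
    by (intro LIMSEQ_le[OF tendsto_mult[OF tendsto_const lim] lim]) (auto simp: nonneg_p_mono_def)
  moreover have "real \<Delta>2 - real \<Delta>1 \<le> V \<Delta>2 q - V \<Delta>1 q" if "1 \<le> \<Delta>1" "\<Delta>1 \<le> \<Delta>2" "q \<le> B" for q \<Delta>1 \<Delta>2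
    using \<open>\<Delta>1 \<le> \<Delta>2\<close>
  proof (induction rule: dec_induct)
    case (step n)
    then show ?case using incr_ge_one[of n q] that by (simp add: age_incr_def)
  qed simp
  ultimately show ?thesis by (auto simp: age_incr_def)
qed

end
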